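(* Let $(x^k,\lambda^k)_{k\ge0}$ be generated by the proximal ADMM applied to (P), and for $k\ge1$ let $E(k)=L_\rho(x^k,\lambda^k)+\sum_{i=0}^n\frac{1}{4\eta_i}\|x_i^k-x_i^{k-1}\|^2$. Then for every $k\ge1$, $$E(k+1)-E(k)\le\sum_{i=0}^{n-1}\frac{1}{\rho_i}\|\lambda_i^{k+1}-\lambda_i^k\|^2-\sum_{i=0}^n\frac{1}{4\eta_i}\Big(\|x_i^{k+1}-x_i^k\|^2+\|x_i^k-x_i^{k-1}\|^2\Big).$$
   Context: Let $n,d\ge1$, and let $f_0,\dots,f_n:\mathbb{R}^d\to\mathbb{R}$ and $\varphi:\mathbb{R}^d\to\mathbb{R}^d$ be continuously differentiable. Problem (P): minimize $\sum_{i=0}^n f_i(x_i)$ over $x=(x_0,\dots,x_n)\in(\mathbb{R}^d)^{n+1}$ subject to $x_{j+1}=\varphi(x_j)$ for $j=0,\dots,n-1$. For penalty parameters $\rho=(\rho_0,\dots,\rho_{n-1})$, $\rho_i>0$, and $\lambda=(\lambda_0,\dots,\lambda_{n-1})\in(\mathbb{R}^d)^n$ the augmented Lagrangian is $L_\rho(x,\lambda)=\sum_{i=0}^n f_i(x_i)+\sum_{i=0}^{n-1}\big(\langle\lambda_i,x_{i+1}-\varphi(x_i)\rangle+\frac{\rho_i}{2}\|x_{i+1}-\varphi(x_i)\|^2\big)$. Proximal ADMM: given $\eta_0,\dots,\eta_n>0$ and an initial point $(x^0,\lambda^0)$, for $k=0,1,\dots$, for $i=0,1,\dots,n$ in this order,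 $x_i^{k+1}$ is a (global) minimizer over $x_i\in\mathbb{R}^d$ of $L_\rho(x_0^{k+1},\dots,x_{i-1}^{k+1},x_i,x_{i+1}^k,\dots,x_n^k,\lambda^k)+\frac{1}{2\eta_i}\|x_i-x_i^k\|^2$ (assumed to exist), and then $\lambda_j^{k+1}=\lambda_j^k+\rho_j(x_{j+1}^{k+1}-\varphi(x_j^{k+1}))$ for $j=0,\dots,n-1$. *)

theory Defs
  imports "HOL-Analysis.Analysis"
begin

definition cont_diff :: "('a::real_normed_vector \<Rightarrow> 'b::real_normed_vector) \<Rightarrow> bool" where
  "cont_diff g \<longleftrightarrow> (\<exists>D :: 'a \<Rightarrow> ('a \<Rightarrow>\<^sub>L 'b).
      (\<forall>z. (g has_derivative blinfun_apply (D z)) (at z)) \<and> continuous_on UNIV D)"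

text \<open>Augmented Lagrangian. Block vectors x = (x_0..x_n) are functions nat => R^d
  (only indices 0..n matter), multipliers lam = (lam_0..lam_{n-1}).\<close>
definition aug_lag ::
  "nat \<Rightarrow> (nat \<Rightarrow> 'a::real_inner \<Rightarrow> real) \<Rightarrow> ('a \<Rightarrow> 'a) \<Rightarrow> (nat \<Rightarrow> real)
    \<Rightarrow> (nat \<Rightarrow> 'a) \<Rightarrow> (nat \<Rightarrow> 'a) \<Rightarrow> real" where
  "aug_lag n f \<phi> \<rho> x lam =
     (\<Sum>i\<le>n. f i (x i)) +
     (\<Sum>i<n. inner (lam i) (x (Suc i) - \<phi> (x i)) + \<rho> i / 2 * (norm (x (Suc i) - \<phi> (x i)))\<^sup>2)"

text \<open>Block vector used in the i-th subproblem of iteration k: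
  blocks j < i already updated, block i free (= z), blocks j > i old.\<close>
definition block_point :: "(nat \<Rightarrow> 'a) \<Rightarrow> (nat \<Rightarrow> 'a) \<Rightarrow> nat \<Rightarrow> 'a \<Rightarrow> nat \<Rightarrow> 'a" where
  "block_point xnew xold i z = (\<lambda>j. if j < i then xnew j else if j = i then z else xold j)"

definition prox_admm ::
  "nat \<Rightarrow> (nat \<Rightarrow> 'a::real_inner \<Rightarrow> real) \<Rightarrow> ('a \<Rightarrow> 'a) \<Rightarrow> (nat \<Rightarrow> real) \<Rightarrow> (nat \<Rightarrow> real)
    \<Rightarrow> (nat \<Rightarrow> nat \<Rightarrow> 'a) \<Rightarrow> (nat \<Rightarrow> nat \<Rightarrow> 'a) \<Rightarrow> bool" where
  "prox_admm n f \<phi> \<rho> \<eta> x lam \<longleftrightarrow>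
     (\<forall>k. \<forall>i\<le>n. \<forall>z.
        aug_lag n f \<phi> \<rho> (block_point (x (Suc k)) (x k) i (x (Suc k) i)) (lam k)
          + (norm (x (Suc k) i - x k i))\<^sup>2 / (2 * \<eta> i)
        \<le> aug_lag n f \<phi> \<rho> (block_point (x (Suc k)) (x k) i z) (lam k)
          + (norm (z - x k i))\<^sup>2 / (2 * \<eta> i)) \<and>
     (\<forall>k. \<forall>j<n. lam (Suc k) j = lam k j + \<rho> j *\<^sub>R (x (Suc k) (Suc j) - \<phi> (x (Suc k) j)))"

definition admm_energy ::
  "nat \<Rightarrow> (nat \<Rightarrow> 'a::real_inner \<Rightarrow> real) \<Rightarrow> ('a \<Rightarrow> 'a) \<Rightarrow> (nat \<Rightarrow> real) \<Rightarrow> (nat \<Rightarrow> real)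
    \<Rightarrow> (nat \<Rightarrow> nat \<Rightarrow> 'a) \<Rightarrow> (nat \<Rightarrow> nat \<Rightarrow> 'a) \<Rightarrow> nat \<Rightarrow> real" where
  "admm_energy n f \<phi> \<rho> \<eta> x lam k =
     aug_lag n f \<phi> \<rho> (x k) (lam k) + (\<Sum>i\<le>n. (norm (x k i - x (k - 1) i))\<^sup>2 / (4 * \<eta> i))"

end

theory Submission
  imports Defs
begin

text \<open>Each block update of a sweep lowers the augmented Lagrangian plus its proximal term
  relative to keeping the old block, so along a sweep the proximal terms telescope into a
  sufficient decrease for the primal step. The multiplier update raises the augmented
  Lagrangian by exactly the dual term. Comparing the two quarter-weighted proximal sums
  in the energy then gives the bound; no smoothness is needed.\<close>

lemma aug_lag_cong:
  assumes "\<And>j. j \<le> n \<Longrightarrow> x j = y j"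
  shows "aug_lag n f \<phi> \<rho> x lam = aug_lag n f \<phi> \<rho> y lam"
  unfolding aug_lag_def using assms
  by (intro arg_cong2[where f="(+)"] sum.cong) auto

lemma block_point_0_old: "block_point xnew xold 0 (xold 0) = xold"
  by (auto simp: block_point_def fun_eq_iff)

lemma block_point_Suc_old:
  "block_point xnew xold (Suc m) (xold (Suc m)) = block_point xnew xold m (xnew m)"
  by (auto simp: block_point_def fun_eq_iff)

lemma aug_lag_block_point_last:
  "aug_lag n f \<phi> \<rho> (block_point xnew xold n (xnew n)) lam = aug_lag n f \<phi> \<rho> xnew lam"
  by (rule aug_lag_cong) (auto simp: block_point_def)

lemma prox_admm_block_descent:
  assumes "prox_admm n f \<phi> \<rho> \<eta> x lam" and "i \<le> n"
  shows "aug_lag n f \<phi> \<rho> (block_point (x (Suc k)) (x k) i (x (Suc k) i)) (lam k)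
      + (norm (x (Suc k) i - x k i))\<^sup>2 / (2 * \<eta> i)
    \<le> aug_lag n f \<phi> \<rho> (block_point (x (Suc k)) (x k) i (x k i)) (lam k)"
  using assms unfolding prox_admm_def
  by (metis diff_self norm_zero power_zero_numeral div_0 add_0_right)

lemma prox_admm_partial_sweep_descent:
  assumes "prox_admm n f \<phi> \<rho> \<eta> x lam" and "m \<le> n"
  shows "aug_lag n f \<phi> \<rho> (block_point (x (Suc k)) (x k) m (x (Suc k) m)) (lam k)
      + (\<Sum>i\<le>m. (norm (x (Suc k) i - x k i))\<^sup>2 / (2 * \<eta> i))
    \<le> aug_lag n f \<phi> \<rho> (x k) (lam k)"
  using assms(2)
proof (induction m)
  case 0
  then show ?case
    using prox_admm_block_descent[OF assms(1), of 0 k] by (simp add: block_point_0_old)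
next
  case (Suc m)
  then show ?case
    using prox_admm_block_descent[OF assms(1) Suc.prems, of k]
    by (simp add: block_point_Suc_old)
qed

lemma prox_admm_primal_descent:
  assumes "prox_admm n f \<phi> \<rho> \<eta> x lam"
  shows "aug_lag n f \<phi> \<rho> (x (Suc k)) (lam k)
      + (\<Sum>i\<le>n. (norm (x (Suc k) i - x k i))\<^sup>2 / (2 * \<eta> i))
    \<le> aug_lag n f \<phi> \<rho> (x k) (lam k)"
  using prox_admm_partial_sweep_descent[OF assms order_refl, of k]
  by (simp add: aug_lag_block_point_last)

lemma inner_scaleR_self_eq_norm_div:
  fixes v :: "'a::real_inner"
  assumes "c \<noteq> 0"
  shows "inner (c *\<^sub>R v) v = (norm (c *\<^sub>R v))\<^sup>2 / c"
proof -
  have "(norm (c *\<^sub>R v))\<^sup>2 = c\<^sup>2 * inner v v"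
    by (simp add: power_mult_distrib power2_norm_eq_inner)
  then show ?thesis
    using assms by (simp add: power2_eq_square)
qed

lemma aug_lag_multiplier_update:
  assumes "\<And>i. i < n \<Longrightarrow> lam' i = lam i + \<rho> i *\<^sub>R (x (Suc i) - \<phi> (x i))"
    and "\<And>i. i < n \<Longrightarrow> \<rho> i \<noteq> 0"
  shows "aug_lag n f \<phi> \<rho> x lam' - aug_lag n f \<phi> \<rho> x lam
    = (\<Sum>i<n. (norm (lam' i - lam i))\<^sup>2 / \<rho> i)"
proof -
  have "aug_lag n f \<phi> \<rho> x lam' - aug_lag n f \<phi> \<rho> x lam
      = (\<Sum>i<n. inner (lam' i - lam i) (x (Suc i) - \<phi> (x i)))"
    unfolding aug_lag_def by (simp add: sum_subtractf[symmetric] inner_diff_left)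
  also have "\<dots> = (\<Sum>i<n. (norm (lam' i - lam i))\<^sup>2 / \<rho> i)"
  proof (rule sum.cong)
    fix i assume "i \<in> {..<n}"
    then have "lam' i - lam i = \<rho> i *\<^sub>R (x (Suc i) - \<phi> (x i))" and "\<rho> i \<noteq> 0"
      using assms by auto
    then show "inner (lam' i - lam i) (x (Suc i) - \<phi> (x i)) = (norm (lam' i - lam i))\<^sup>2 / \<rho> i"
      by (metis inner_scaleR_self_eq_norm_div)
  qed simp
  finally show ?thesis .
qed

theorem mainTheorem3:
  fixes n :: nat
    and f :: "nat \<Rightarrow> real ^ 'd \<Rightarrow> real"
    and \<phi> :: "real ^ 'd \<Rightarrow> real ^ 'd"
    and \<rho> \<eta> :: "nat \<Rightarrow> real"
    and x lam :: "nat \<Rightarrow> nat \<Rightarrow> real ^ 'd"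
    and k :: nat
  assumes "n \<ge> 1"
    and "\<forall>i\<le>n. cont_diff (f i)"
    and "cont_diff \<phi>"
    and "\<forall>i<n. \<rho> i > 0"
    and "\<forall>i\<le>n. \<eta> i > 0"
    and "prox_admm n f \<phi> \<rho> \<eta> x lam"
    and "k \<ge> 1"
  shows "admm_energy n f \<phi> \<rho> \<eta> x lam (Suc k) - admm_energy n f \<phi> \<rho> \<eta> x lam k
    \<le> (\<Sum>i<n. (norm (lam (Suc k) i - lam k i))\<^sup>2 / \<rho> i)
       - (\<Sum>i\<le>n. ((norm (x (Suc k) i - x k i))\<^sup>2 + (norm (x k i - x (k - 1) i))\<^sup>2) / (4 * \<eta> i))"
proof -
  have primal: "aug_lag n f \<phi> \<rho> (x (Suc k)) (lam k)
      + (\<Sum>i\<le>n. (norm (x (Suc k) i - x k i))\<^sup>2 / (2 * \<eta> i))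
    \<le> aug_lag n f \<phi> \<rho> (x k) (lam k)"
    using prox_admm_primal_descent[OF assms(6)] .
  have dual: "aug_lag n f \<phi> \<rho> (x (Suc k)) (lam (Suc k)) - aug_lag n f \<phi> \<rho> (x (Suc k)) (lam k)
      = (\<Sum>i<n. (norm (lam (Suc k) i - lam k i))\<^sup>2 / \<rho> i)"
    using assms(4,6) unfolding prox_admm_def
    by (intro aug_lag_multiplier_update) auto
  have "(\<Sum>i\<le>n. ((norm (x (Suc k) i - x k i))\<^sup>2 + (norm (x k i - x (k - 1) i))\<^sup>2) / (4 * \<eta> i))
      = (\<Sum>i\<le>n. (norm (x (Suc k) i - x k i))\<^sup>2 / (2 * \<eta> i))
        - (\<Sum>i\<le>n. (norm (x (Suc k) i - x k i))\<^sup>2 / (4 * \<eta> i))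
        + (\<Sum>i\<le>n. (norm (x k i - x (k - 1) i))\<^sup>2 / (4 * \<eta> i))"
    by (simp add: sum_subtractf[symmetric] sum.distrib[symmetric] field_simps add_divide_distrib)
  then show ?thesis
    unfolding admm_energy_def using primal dual by simp
qed

end
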